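(* Let $\mathbb{F}$ be an algebraically closed field with $\mathrm{char}\,\mathbb{F}=2$, and let $\mathcal{A}$ be a (not necessarily unital) subalgebra of $\mathbf{O}$ with $\mathcal{A}\not\subseteq\mathbf{O}_0$ and $\dim\mathcal{A}\ge3$. Then there exists $g\in{\rm G}_2$ such that either (a) $\{e_1,e_2,\mathbf{u}_1\}\subseteq g\mathcal{A}$; or (b) $\{e_1,\mathbf{u}_1,\mathbf{v}_2\}\subseteq g\mathcal{A}$.
   Context: The split octonion algebra $\mathbf{O}$ is the 8-dimensional $\mathbb{F}$-vector space of formal matrices $a=\begin{pmatrix}\alpha&\mathbf{u}\\ \mathbf{v}&\beta\end{pmatrix}$ with $\alpha,\beta\in\mathbb{F}$, $\mathbf{u},\mathbf{v}\in\mathbb{F}^3$, with multiplication $\begin{pmatrix}\alpha&\mathbf{u}\\ \mathbf{v}&\beta\end{pmatrix}\begin{pmatrix}\alpha'&\mathbf{u}'\\ \mathbf{v}'&\beta'\end{pmatrix}=\begin{pmatrix}\alpha\alpha'+\mathbf{u}\cdot\mathbf{v}'&\alpha\mathbf{u}'+\beta'\mathbf{u}-\mathbf{v}\times\mathbf{v}'\\ \alpha'\mathbf{v}+\beta\mathbf{v}'+\mathbf{u}\times\mathbf{u}'&\beta\beta'+\mathbf{v}\cdot\mathbf{u}'\end{pmatrix}$ (dot product and cross product on $\mathbb{F}^3$). Trace $\mathrm{tr}(a)=\alpha+\beta$, $\mathbf{O}_0=\{a\in\mathbf{O}\mid\mathrm{tr}(a)=0\}$. With $\mathbf{c}_1,\mathbf{c}_2,\mathbf{c}_3$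 the standard basis of $\mathbb{F}^3$: $e_1$ has $\alpha=1$ and all else $0$, $e_2$ has $\beta=1$ and all else $0$, $\mathbf{u}_i$ has $\mathbf{u}=\mathbf{c}_i$ and all else $0$, $\mathbf{v}_i$ has $\mathbf{v}=\mathbf{c}_i$ and all else $0$. ${\rm G}_2=\mathrm{Aut}(\mathbf{O})$. *)

theory Defs
  imports "HOL-Analysis.Analysis" "HOL-Computational_Algebra.Polynomial"
begin

text \<open>Split octonions over a field 'a, modelled as the coordinate space 'a^8.
 Coordinate layout: index 0 = alpha, indices 1,2,3 = u, indices 4,5,6 = v, index 7 = beta.\<close>

type_synonym 'a oct = "'a ^ 8"

definition dot3 :: "'a::comm_ring_1 ^ 3 \<Rightarrow> 'a ^ 3 \<Rightarrow> 'a" where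
  "dot3 x y = x$1 * y$1 + x$2 * y$2 + x$3 * y$3"

definition cross3f :: "'a::comm_ring_1 ^ 3 \<Rightarrow> 'a ^ 3 \<Rightarrow> 'a ^ 3" where
  "cross3f x y = (\<chi> j. if j = 1 then x$2 * y$3 - x$3 * y$2
                      else if j = 2 then x$3 * y$1 - x$1 * y$3
                      else x$1 * y$2 - x$2 * y$1)"

definition oalpha :: "'a oct \<Rightarrow> 'a" where "oalpha a = a$0"
definition obeta :: "'a oct \<Rightarrow> 'a" where "obeta a = a$7"
definition ou :: "'a oct \<Rightarrow> 'a ^ 3" where
  "ou a = (\<chi> j. if j = 1 then a$1 else if j = 2 then a$2 else a$3)"
definition ov :: "'a oct \<Rightarrow> 'a ^ 3" where
  "ov a = (\<chi> j. if j = 1 then a$4 else if j = 2 then a$5 else a$6)"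

definition mkoct :: "'a::zero \<Rightarrow> 'a ^ 3 \<Rightarrow> 'a ^ 3 \<Rightarrow> 'a \<Rightarrow> 'a oct" where
  "mkoct \<alpha> u v \<beta> = (\<chi> i. if i = 0 then \<alpha> else if i = 1 then u$1 else if i = 2 then u$2
     else if i = 3 then u$3 else if i = 4 then v$1 else if i = 5 then v$2
     else if i = 6 then v$3 else \<beta>)"

text \<open>Split octonion multiplication (Zorn vector matrices).\<close>
definition omult :: "'a::comm_ring_1 oct \<Rightarrow> 'a oct \<Rightarrow> 'a oct" where
  "omult a b = mkoct
     (oalpha a * oalpha b + dot3 (ou a) (ov b))
     (oalpha a *s ou b + obeta b *s ou a - cross3f (ov a) (ov b))
     (oalpha b *s ov a + obeta a *s ov b + cross3f (ou a) (ou b))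
     (obeta a * obeta b + dot3 (ov a) (ou b))"

definition otr :: "'a::comm_ring_1 oct \<Rightarrow> 'a" where "otr a = oalpha a + obeta a"

definition O0 :: "'a::comm_ring_1 oct set" where "O0 = {a. otr a = 0}"

definition c3 :: "nat \<Rightarrow> 'a::comm_ring_1 ^ 3" where
  "c3 i = (\<chi> j. if j = of_nat i then 1 else 0)"

definition e1 :: "'a::comm_ring_1 oct" where "e1 = mkoct 1 0 0 0"
definition e2 :: "'a::comm_ring_1 oct" where "e2 = mkoct 0 0 0 1"
definition uu :: "nat \<Rightarrow> 'a::comm_ring_1 oct" where "uu i = mkoct 0 (c3 i) 0 0"
definition vv :: "nat \<Rightarrow> 'a::comm_ring_1 oct" where "vv i = mkoct 0 0 (c3 i) 0"

definition is_subalgebra :: "'a::field oct set \<Rightarrow> bool" where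
  "is_subalgebra A \<longleftrightarrow> vec.subspace A \<and> (\<forall>x\<in>A. \<forall>y\<in>A. omult x y \<in> A)"

definition G2 :: "('a::field oct \<Rightarrow> 'a oct) set" where
  "G2 = {g. Vector_Spaces.linear (*s) (*s) g \<and> bij g \<and> (\<forall>x y. g (omult x y) = omult (g x) (g y))}"

end

theory Submission
  imports Defs
begin

(* An element a of A of nonzero trace t satisfies a^2 - t a + N(a) 1 = 0, so either N(a) = 0 or the
   unit lies in A. Shifting a by l 1, with l a root of x^2 - t x + N(a), gives an element of A of
   norm zero and, since the characteristic is 2, still of trace t; rescaled, it is an idempotent of
   trace one. G2 acts transitively on these idempotents, so we may assume that e1 lies in A. Then A
   is spanned by its Peirce components with respect to e1, which lie in F e1, in the u-part U, in
   the v-part V and in F e2. If e2 lies in A, a nonzero element of A in U or V is moved to u1 by the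
   copy of SL3 in G2 fixing e1 and e2, composed if necessary with the flip exchanging e1 and e2.
   Otherwise, since products of two elements of U lie in V and vice versa, dim A >= 3 forces nonzero
   elements u of U and v of V in A; the e2-component u.v of their product vanishes, and SL3 moves
   the pair (u, v) to (u1, v2). *)

lemma vec3_eq_iff: "(x :: 'a ^ 3) = y \<longleftrightarrow> x$1 = y$1 \<and> x$2 = y$2 \<and> x$3 = y$3"
  by (simp add: vec_eq_iff forall_3)

lemma vec3_ex_nonzero_nth: "(x :: 'a::zero ^ 3) \<noteq> 0 \<Longrightarrow> \<exists>i. x $ i \<noteq> 0"
  by (simp add: vec_eq_iff)

lemma exhaust_8:
  fixes x :: 8
  shows "x = 0 \<or> x = 1 \<or> x = 2 \<or> x = 3 \<or> x = 4 \<or> x = 5 \<or> x = 6 \<or> x = 7"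
proof (induct x)
  case (of_int z)
  then have "z = 0 \<or> z = 1 \<or> z = 2 \<or> z = 3 \<or> z = 4 \<or> z = 5 \<or> z = 6 \<or> z = 7" by fastforce
  then show ?case by auto
qed

lemma mkoct_components [simp]:
  "oalpha (mkoct a u v b) = a" "ou (mkoct a u v b) = u" "ov (mkoct a u v b) = v" "obeta (mkoct a u v b) = b"
  by (auto simp: oalpha_def obeta_def ou_def ov_def mkoct_def vec_eq_iff forall_3)

lemma mkoct_eq_iff [simp]:
  "mkoct a u v b = mkoct a' u' v' b' \<longleftrightarrow> a = a' \<and> u = u' \<and> v = v' \<and> b = b'"
  by (metis mkoct_components)

lemma mkoct_collapse: "mkoct (oalpha x) (ou x) (ov x) (obeta x) = x"
  unfolding vec_eq_iff
proof
  fix i :: 8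
  show "mkoct (oalpha x) (ou x) (ov x) (obeta x) $ i = x $ i"
    using exhaust_8[of i] by (auto simp: mkoct_def oalpha_def obeta_def ou_def ov_def)
qed

lemma oct_eqI:
  fixes x y :: "'a::zero oct"
  assumes "oalpha x = oalpha y" "ou x = ou y" "ov x = ov y" "obeta x = obeta y"
  shows "x = y"
  using assms mkoct_collapse[of x] mkoct_collapse[of y] by metis

lemma oct_components_zero [simp]: "oalpha 0 = 0" "ou 0 = 0" "ov 0 = 0" "obeta 0 = 0"
  by (simp_all add: oalpha_def obeta_def ou_def ov_def vec_eq_iff forall_3)

lemma oct_components_add [simp]:
  "oalpha (x + y) = oalpha x + oalpha y" "ou (x + y) = ou x + ou y"
  "ov (x + y) = ov x + ov y" "obeta (x + y) = obeta x + obeta y"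
  by (simp_all add: oalpha_def obeta_def ou_def ov_def vec_eq_iff forall_3)

lemma oct_components_diff [simp]:
  "oalpha (x - y) = oalpha x - oalpha y" "ou (x - y) = ou x - ou y"
  "ov (x - y) = ov x - ov y" "obeta (x - y) = obeta x - obeta y"
  by (simp_all add: oalpha_def obeta_def ou_def ov_def vec_eq_iff forall_3)

lemma oct_components_scale [simp]:
  "oalpha (c *s x) = c * oalpha x" "ou (c *s x) = c *s ou x"
  "ov (c *s x) = c *s ov x" "obeta (c *s x) = c * obeta x"
  by (simp_all add: oalpha_def obeta_def ou_def ov_def vec_eq_iff forall_3)

lemma oct_components_omult [simp]:
  "oalpha (omult x y) = oalpha x * oalpha y + dot3 (ou x) (ov y)"
  "ou (omult x y) = oalpha x *s ou y + obeta y *s ou x - cross3f (ov x) (ov y)"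
  "ov (omult x y) = oalpha y *s ov x + obeta x *s ov y + cross3f (ou x) (ou y)"
  "obeta (omult x y) = obeta x * obeta y + dot3 (ov x) (ou y)"
  by (simp_all add: omult_def)

lemma uu1_eq: "uu 1 = mkoct 0 (vector [1, 0, 0]) 0 0"
  and vv2_eq: "vv 2 = mkoct 0 0 (vector [0, 1, 0]) 0"
  by (simp_all add: uu_def vv_def c3_def vec3_eq_iff)

section \<open>Dot and cross products in dimension 3\<close>

lemma cross3f_nth [simp]:
  "cross3f x y $ 1 = x$2 * y$3 - x$3 * y$2"
  "cross3f x y $ 2 = x$3 * y$1 - x$1 * y$3"
  "cross3f x y $ 3 = x$1 * y$2 - x$2 * y$1"
  by (simp_all add: cross3f_def)

lemma dot3_zero [simp]: "dot3 x 0 = 0" "dot3 0 x = 0"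
  by (simp_all add: dot3_def)

lemma cross3f_zero [simp]: "cross3f x 0 = 0" "cross3f 0 x = 0"
  by (simp_all add: vec3_eq_iff)

lemma cross3f_self [simp]: "cross3f x x = 0"
  by (simp add: vec3_eq_iff mult.commute)

lemma dot3_commute: "dot3 x y = dot3 y x"
  by (simp add: dot3_def mult.commute)

lemma dot3_axis: "dot3 (axis i c) w = c * w $ i" "dot3 w (axis i c) = c * w $ i"
proof -
  have "dot3 (axis i c) w = (\<Sum>j\<in>UNIV. (if j = i then c * w $ j else 0))"
    by (simp add: dot3_def sum_3 axis_def)
  then show "dot3 (axis i c) w = c * w $ i" by simp
  then show "dot3 w (axis i c) = c * w $ i" by (simp add: dot3_commute)
qed

lemma dot3_cross3f_cyclic: "dot3 a (cross3f b c) = dot3 b (cross3f c a)"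
  by (simp add: dot3_def algebra_simps)

lemma dot3_cross3f_same: "dot3 a (cross3f a b) = 0"
  by (simp add: dot3_def algebra_simps)

lemma cross3f_scale: "cross3f (c *s a) b = c *s cross3f a b"
  by (simp add: vec3_eq_iff algebra_simps)

lemma cross3f_cross3f: "cross3f (cross3f a b) c = dot3 a c *s b - dot3 b c *s a"
  by (simp add: vec3_eq_iff dot3_def algebra_simps)

lemma ex_dot3_eq_1:
  fixes w :: "'a::field ^ 3"
  assumes "w \<noteq> 0"
  shows "\<exists>q. dot3 q w = 1"
proof -
  obtain i where "w $ i \<noteq> 0" using vec3_ex_nonzero_nth[OF assms] by blast
  then have "dot3 (axis i (inverse (w $ i))) w = 1" by (simp add: dot3_axis)
  then show ?thesis ..
qed

lemma ex_orthogonal_nonzero: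
  fixes u :: "'a::field ^ 3"
  assumes "u \<noteq> 0"
  shows "\<exists>w. w \<noteq> 0 \<and> dot3 u w = 0"
proof -
  have "\<exists>j. cross3f u (axis j 1) \<noteq> 0"
  proof (rule ccontr)
    assume "\<nexists>j. cross3f u (axis j 1) \<noteq> 0"
    then have "cross3f u (axis 1 1) = 0" "cross3f u (axis 2 1) = 0" by auto
    then have "u = 0" by (simp add: vec3_eq_iff axis_def)
    with assms show False ..
  qed
  then obtain j where "cross3f u (axis j 1) \<noteq> 0" ..
  with dot3_cross3f_same show ?thesis by blast
qed

lemma ex_cross3f_eq:
  fixes u w :: "'a::field ^ 3"
  assumes "u \<noteq> 0" "dot3 u w = 0"
  shows "\<exists>r. cross3f r u = w"
proof -
  obtain i where i: "u $ i \<noteq> 0" using vec3_ex_nonzero_nth[OF assms(1)] by blast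
  have "cross3f (cross3f (axis i 1) w) u = u $ i *s w"
    using assms(2) by (simp add: cross3f_cross3f dot3_axis dot3_commute)
  then have "cross3f (inverse (u $ i) *s cross3f (axis i 1) w) u = w"
    using i by (simp add: cross3f_scale)
  then show ?thesis ..
qed

lemma cross3f_eq_0_imp_parallel:
  fixes u v :: "'a::field ^ 3"
  assumes "u \<noteq> 0" "cross3f u v = 0"
  shows "\<exists>c. v = c *s u"
proof -
  obtain i where i: "u $ i \<noteq> 0" using vec3_ex_nonzero_nth[OF assms(1)] by blast
  have "cross3f (cross3f u v) (axis i 1) = 0" using assms(2) by (simp add: vec3_eq_iff)
  then have "u $ i *s v = v $ i *s u" by (simp add: cross3f_cross3f dot3_commute dot3_axis)
  then have "v = (v $ i / u $ i) *s u" using i by (simp add: vec3_eq_iff field_simps)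
  then show ?thesis ..
qed

lemma collinear_if_cross3f_eq_0:
  fixes S :: "('a::field ^ 3) set"
  assumes "\<forall>x\<in>S. \<forall>y\<in>S. cross3f x y = 0"
  shows "\<exists>w. \<forall>x\<in>S. \<exists>c. x = c *s w"
proof (cases "S \<subseteq> {0}")
  case True
  then show ?thesis by (intro exI[of _ 0]) auto
next
  case False
  then obtain w where "w \<in> S" "w \<noteq> 0" by blast
  then show ?thesis using assms cross3f_eq_0_imp_parallel by blast
qed

definition lincomb3 :: "'a::comm_ring_1 ^ 3 \<Rightarrow> 'a ^ 3 \<Rightarrow> 'a ^ 3 \<Rightarrow> 'a ^ 3 \<Rightarrow> 'a ^ 3" where
  "lincomb3 c p q r = c$1 *s p + c$2 *s q + c$3 *s r"

lemma lincomb3_linear: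
  "lincomb3 (c + d) p q r = lincomb3 c p q r + lincomb3 d p q r"
  "lincomb3 (c - d) p q r = lincomb3 c p q r - lincomb3 d p q r"
  "lincomb3 (k *s c) p q r = k *s lincomb3 c p q r"
  by (simp_all add: lincomb3_def vec3_eq_iff algebra_simps)

text \<open>If c \<mapsto> lincomb3 c p q r is the matrix M, then c \<mapsto> lincomb3 c (q \<times> r) (r \<times> p) (p \<times> q)
  is its cofactor matrix; the next three lemmas are the classical cofactor identities.\<close>

lemma dot3_lincomb3_cofactors:
  "dot3 (lincomb3 u p q r) (lincomb3 v (cross3f q r) (cross3f r p) (cross3f p q)) =
     dot3 p (cross3f q r) * dot3 u v"
  by (simp add: lincomb3_def dot3_def algebra_simps)

lemma cross3f_lincomb3:
  "cross3f (lincomb3 u p q r) (lincomb3 u' p q r) =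
     lincomb3 (cross3f u u') (cross3f q r) (cross3f r p) (cross3f p q)"
  by (simp add: lincomb3_def vec3_eq_iff algebra_simps)

lemma cross3f_lincomb3_cofactors:
  "cross3f (lincomb3 v (cross3f q r) (cross3f r p) (cross3f p q))
           (lincomb3 v' (cross3f q r) (cross3f r p) (cross3f p q)) =
     dot3 p (cross3f q r) *s lincomb3 (cross3f v v') p q r"
  by (simp add: lincomb3_def vec3_eq_iff dot3_def algebra_simps)

section \<open>The automorphism group\<close>

lemma G2I:
  fixes g :: "'a::field oct \<Rightarrow> 'a oct"
  assumes "\<And>x y. g (x + y) = g x + g y" "\<And>c x. g (c *s x) = c *s g x"
    and "\<And>x. h (g x) = x" "\<And>x. g (h x) = x"
    and "\<And>x y. g (omult x y) = omult (g x) (g y)"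
  shows "g \<in> G2"
proof -
  have "Vector_Spaces.linear (*s) (*s) g"
    unfolding Vector_Spaces.linear_iff using assms(1,2) vec.vector_space_axioms by auto
  moreover have "bij g" using assms(3,4) by (intro o_bij[of h]) auto
  ultimately show ?thesis unfolding G2_def using assms(5) by auto
qed

lemma G2_linear: "g \<in> G2 \<Longrightarrow> Vector_Spaces.linear (*s) (*s) g"
  and G2_bij: "g \<in> G2 \<Longrightarrow> bij g"
  and G2_omult: "g \<in> G2 \<Longrightarrow> g (omult x y) = omult (g x) (g y)"
  unfolding G2_def by auto

lemma G2_comp: "g \<in> G2 \<Longrightarrow> h \<in> G2 \<Longrightarrow> g \<circ> h \<in> G2"
  unfolding G2_def by (auto intro: Vector_Spaces.linear_compose bij_comp)

lemma G2_inv: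
  assumes "g \<in> G2"
  shows "inv g \<in> G2"
proof -
  have bij: "bij g" using assms by (rule G2_bij)
  have "Vector_Spaces.linear (*s) (*s) (inv g)"
    using vec.inj_linear_imp_inv_linear[OF G2_linear[OF assms]] bij bij_is_inj by blast
  moreover have "inv g (omult x y) = omult (inv g x) (inv g y)" for x y
  proof -
    have "g (omult (inv g x) (inv g y)) = omult x y"
      using G2_omult[OF assms] bij by (simp add: bij_is_surj surj_f_inv_f)
    then show ?thesis using bij by (metis bij_inv_eq_iff)
  qed
  ultimately show ?thesis unfolding G2_def using bij by (auto simp: bij_imp_bij_inv)
qed

lemma G2_image_subalgebra:
  assumes "g \<in> G2" "is_subalgebra A"
  shows "is_subalgebra (g ` A)"
proof -
  interpret g: Vector_Spaces.linear "(*s)" "(*s)" g by (rule G2_linear[OF assms(1)])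
  have "vec.subspace (g ` A)"
    using assms(2) g.subspace_image unfolding is_subalgebra_def by blast
  moreover have "omult (g a) (g b) \<in> g ` A" if "a \<in> A" "b \<in> A" for a b
    using assms that unfolding is_subalgebra_def by (simp flip: G2_omult)
  ultimately show ?thesis unfolding is_subalgebra_def by blast
qed

lemma G2_image_dim:
  assumes "g \<in> G2"
  shows "vec.dim (g ` A) = vec.dim A"
  using G2_linear[OF assms] bij_is_inj[OF G2_bij[OF assms]]
  by (rule vec.dim_image_eq[OF _ inj_on_subset]) simp

lemma G2_subset_inv_image:
  assumes "g \<in> G2" "g ` S \<subseteq> B"
  shows "S \<subseteq> inv g ` B"
  using image_mono[OF assms(2), of "inv g"] image_inv_f_f[OF bij_is_inj[OF G2_bij[OF assms(1)]]]
  by simp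

definition unip_u :: "'a::comm_ring_1 ^ 3 \<Rightarrow> 'a oct \<Rightarrow> 'a oct" where
  "unip_u a x = mkoct (oalpha x + dot3 a (ov x))
     (ou x + (obeta x - oalpha x - dot3 a (ov x)) *s a) (ov x - cross3f a (ou x)) (obeta x - dot3 a (ov x))"

definition oflip :: "'a::comm_ring_1 oct \<Rightarrow> 'a oct" where
  "oflip x = mkoct (obeta x) (- ov x) (- ou x) (oalpha x)"

definition unip_v :: "'a::comm_ring_1 ^ 3 \<Rightarrow> 'a oct \<Rightarrow> 'a oct" where
  "unip_v b = oflip \<circ> unip_u b \<circ> oflip"

lemma unip_v_apply:
  "unip_v b x = mkoct (oalpha x + dot3 b (ou x))
     (ou x - cross3f b (ov x)) (ov x + (obeta x - oalpha x - dot3 b (ou x)) *s b) (obeta x - dot3 b (ou x))"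
  by (simp add: unip_v_def unip_u_def oflip_def vec3_eq_iff dot3_def algebra_simps)

lemma unip_u_G2: "unip_u a \<in> G2"
proof (rule G2I)
  show "unip_u (- a) (unip_u a x) = x" "unip_u a (unip_u (- a) x) = x" for x :: "'a oct"
    by (rule oct_eqI; simp add: unip_u_def vec3_eq_iff dot3_def algebra_simps)+
qed (rule oct_eqI; simp add: unip_u_def vec3_eq_iff dot3_def algebra_simps)+

lemma oflip_G2: "oflip \<in> G2"
proof (rule G2I)
  show "oflip (oflip x) = x" for x :: "'a oct"
    by (rule oct_eqI) (simp_all add: oflip_def)
qed (rule oct_eqI; simp add: oflip_def vec3_eq_iff dot3_def algebra_simps)+

lemma unip_v_G2: "unip_v b \<in> G2"
  unfolding unip_v_def by (intro G2_comp oflip_G2 unip_u_G2)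

text \<open>The stabiliser of e1 and e2 in G2 is SL3: u1, u2, u3 go to p, q, r, and the v-part is
  transformed by the cofactor matrix, so that the pairing between u and v is preserved.\<close>

definition sl3_aut :: "'a::comm_ring_1 ^ 3 \<Rightarrow> 'a ^ 3 \<Rightarrow> 'a ^ 3 \<Rightarrow> 'a oct \<Rightarrow> 'a oct" where
  "sl3_aut p q r x = mkoct (oalpha x) (lincomb3 (ou x) p q r)
     (lincomb3 (ov x) (cross3f q r) (cross3f r p) (cross3f p q)) (obeta x)"

lemma sl3_aut_G2:
  fixes p q r :: "'a::field ^ 3"
  assumes det: "dot3 p (cross3f q r) = 1"
  shows "sl3_aut p q r \<in> G2"
proof (rule G2I)
  let ?h = "\<lambda>x. mkoct (oalpha x)
     (vector [dot3 (cross3f q r) (ou x), dot3 (cross3f r p) (ou x), dot3 (cross3f p q) (ou x)])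
     (vector [dot3 p (ov x), dot3 q (ov x), dot3 r (ov x)]) (obeta x)"
  let ?D = "dot3 p (cross3f q r)"
  have "?h (sl3_aut p q r x) = mkoct (oalpha x) (?D *s ou x) (?D *s ov x) (obeta x)"
    and "sl3_aut p q r (?h x) = mkoct (oalpha x) (?D *s ou x) (?D *s ov x) (obeta x)" for x :: "'a oct"
    by (simp_all add: sl3_aut_def lincomb3_def vec3_eq_iff dot3_def algebra_simps)
  then show "?h (sl3_aut p q r x) = x" "sl3_aut p q r (?h x) = x" for x :: "'a oct"
    by (simp_all add: det mkoct_collapse)
  have dot_vu: "dot3 (lincomb3 v (cross3f q r) (cross3f r p) (cross3f p q)) (lincomb3 u p q r) = dot3 v u"
    for u v using dot3_lincomb3_cofactors[of u p q r v] det by (simp add: dot3_commute)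
  show "sl3_aut p q r (omult x y) = omult (sl3_aut p q r x) (sl3_aut p q r y)" for x y :: "'a oct"
    by (rule oct_eqI; simp add: sl3_aut_def lincomb3_linear dot3_lincomb3_cofactors dot_vu
        cross3f_lincomb3[of _ p q r] cross3f_lincomb3_cofactors det)
qed (rule oct_eqI; simp add: sl3_aut_def lincomb3_linear)+

lemma sl3_frame:
  fixes u w :: "'a::field ^ 3"
  assumes "u \<noteq> 0" "w \<noteq> 0" "dot3 u w = 0"
  shows "\<exists>g\<in>G2. g e1 = e1 \<and> g e2 = e2 \<and> g (uu 1) = mkoct 0 u 0 0 \<and> g (vv 2) = mkoct 0 0 w 0"
proof -
  obtain r where r: "cross3f r u = w" using ex_cross3f_eq[OF assms(1,3)] ..
  obtain q where q: "dot3 q w = 1" using ex_dot3_eq_1[OF assms(2)] ..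
  have "dot3 u (cross3f q r) = 1" using q r by (simp add: dot3_cross3f_cyclic)
  then have "sl3_aut u q r \<in> G2" by (rule sl3_aut_G2)
  moreover have "sl3_aut u q r e1 = e1" "sl3_aut u q r e2 = e2"
    "sl3_aut u q r (uu 1) = mkoct 0 u 0 0" "sl3_aut u q r (vv 2) = mkoct 0 0 w 0"
    using r unfolding uu1_eq vv2_eq by (simp_all add: sl3_aut_def lincomb3_def e1_def e2_def)
  ultimately show ?thesis by blast
qed

lemma sl3_frame_u:
  fixes u :: "'a::field ^ 3"
  assumes "u \<noteq> 0"
  shows "\<exists>g\<in>G2. g e1 = e1 \<and> g e2 = e2 \<and> g (uu 1) = mkoct 0 u 0 0"
  using sl3_frame[OF assms] ex_orthogonal_nonzero[OF assms] by blast

section \<open>Idempotents of trace one\<close>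

definition onorm :: "'a::comm_ring_1 oct \<Rightarrow> 'a" where
  "onorm x = oalpha x * obeta x - dot3 (ou x) (ov x)"

text \<open>By omult_self, the elements e with otr e = 1 and onorm e = 0 are exactly the idempotents
  of trace one.\<close>

lemma omult_self: "omult x x = otr x *s x - onorm x *s (e1 + e2)"
  by (rule oct_eqI) (simp_all add: otr_def onorm_def e1_def e2_def dot3_commute algebra_simps)

lemma otr_scale: "otr (c *s x) = c * otr x"
  by (simp add: otr_def algebra_simps)

lemma onorm_scale: "onorm (c *s x) = c * c * onorm x"
  by (simp add: onorm_def dot3_def algebra_simps)

lemma G2_e1_to_idempotent_alpha_nonzero:
  fixes e :: "'a::field oct"
  assumes tr: "otr e = 1" and norm: "onorm e = 0" and alpha: "oalpha e \<noteq> 0"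
  shows "\<exists>g\<in>G2. g e1 = e"
proof -
  define b where "b = (- 1 / oalpha e) *s ov e"
  have beta: "obeta e = 1 - oalpha e"
    using tr by (simp add: otr_def algebra_simps)
  have bu: "dot3 b (ou e) = - obeta e"
    using norm alpha by (simp add: b_def onorm_def dot3_def field_simps)
  have "(- 1 - dot3 b (ou e)) *s b = ov e"
    unfolding bu beta using alpha by (simp add: b_def)
  then have "unip_v b (unip_u (- ou e) e1) = e"
    by (intro oct_eqI) (simp_all add: unip_u_def unip_v_apply e1_def bu beta)
  moreover have "unip_v b \<circ> unip_u (- ou e) \<in> G2"
    by (intro G2_comp unip_u_G2 unip_v_G2)
  ultimately show ?thesis by (metis comp_apply)
qed

lemma G2_idempotent_to_alpha_nonzero:
  fixes e :: "'a::field oct"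
  assumes tr: "otr e = 1" and norm: "onorm e = 0" and alpha: "oalpha e = 0"
  shows "\<exists>h\<in>G2. otr (h e) = 1 \<and> onorm (h e) = 0 \<and> oalpha (h e) \<noteq> 0"
proof -
  have beta: "obeta e = 1" using tr alpha by (simp add: otr_def)
  have uv: "dot3 (ou e) (ov e) = 0" using norm alpha by (simp add: onorm_def)
  consider "ov e \<noteq> 0" | "ov e = 0" "ou e \<noteq> 0" | "ov e = 0" "ou e = 0" by blast
  then show ?thesis
  proof cases
    case 1
    then obtain q where q: "dot3 q (ov e) = 1" using ex_dot3_eq_1 by blast
    have "otr (unip_u q e) = 1 \<and> onorm (unip_u q e) = 0 \<and> oalpha (unip_u q e) \<noteq> 0"
      using alpha beta uv q by (simp add: unip_u_def otr_def onorm_def dot3_def algebra_simps)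
    then show ?thesis using unip_u_G2 by blast
  next
    case 2
    then obtain q where q: "dot3 q (ou e) = 1" using ex_dot3_eq_1 by blast
    have "otr (unip_v q e) = 1 \<and> onorm (unip_v q e) = 0 \<and> oalpha (unip_v q e) \<noteq> 0"
      using 2 alpha beta q by (simp add: unip_v_apply otr_def onorm_def)
    then show ?thesis using unip_v_G2 by blast
  next
    case 3
    have "otr (oflip e) = 1 \<and> onorm (oflip e) = 0 \<and> oalpha (oflip e) \<noteq> 0"
      using 3 alpha beta by (simp add: oflip_def otr_def onorm_def)
    then show ?thesis using oflip_G2 by blast
  qed
qed

lemma G2_e1_to_idempotent:
  fixes e :: "'a::field oct"
  assumes "otr e = 1" "onorm e = 0"
  shows "\<exists>g\<in>G2. g e1 = e"
proof (cases "oalpha e = 0")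
  case True
  then obtain h where h: "h \<in> G2" "otr (h e) = 1" "onorm (h e) = 0" "oalpha (h e) \<noteq> 0"
    using G2_idempotent_to_alpha_nonzero assms by blast
  then obtain g where g: "g \<in> G2" "g e1 = h e"
    using G2_e1_to_idempotent_alpha_nonzero by blast
  have "(inv h \<circ> g) e1 = e"
    using g(2) G2_bij[OF h(1)] by (simp add: bij_is_inj)
  moreover have "inv h \<circ> g \<in> G2" using G2_comp G2_inv g(1) h(1) by blast
  ultimately show ?thesis by blast
qed (use G2_e1_to_idempotent_alpha_nonzero assms in blast)

lemma subalgebra_add: "is_subalgebra A \<Longrightarrow> x \<in> A \<Longrightarrow> y \<in> A \<Longrightarrow> x + y \<in> A"
  and subalgebra_diff: "is_subalgebra A \<Longrightarrow> x \<in> A \<Longrightarrow> y \<in> A \<Longrightarrow> x - y \<in> A"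
  and subalgebra_scale: "is_subalgebra A \<Longrightarrow> x \<in> A \<Longrightarrow> c *s x \<in> A"
  and subalgebra_omult: "is_subalgebra A \<Longrightarrow> x \<in> A \<Longrightarrow> y \<in> A \<Longrightarrow> omult x y \<in> A"
  unfolding is_subalgebra_def using vec.subspace_add vec.subspace_diff vec.subspace_scale by blast+

lemma ex_quadratic_root: "\<exists>l::'a::alg_closed_field. l * l - t * l + n = 0"
proof -
  obtain l where "poly [:n, - t, 1:] l = 0"
    using alg_closed_imp_poly_has_root[of "[:n, - t, 1:]"] by auto
  then have "l * l - t * l + n = 0" by (simp add: algebra_simps)
  then show ?thesis ..
qed

lemma subalgebra_ex_idempotent:
  fixes A :: "'a::alg_closed_field oct set"
  assumes char: "CHAR('a) = 2" and A: "is_subalgebra A" and a: "a \<in> A" "otr a \<noteq> 0"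
  shows "\<exists>e\<in>A. otr e = 1 \<and> onorm e = 0"
proof -
  define t where "t = otr a"
  define n where "n = onorm a"
  obtain l where l: "l * l - t * l + n = 0" and l0: "n = 0 \<Longrightarrow> l = 0"
    using ex_quadratic_root[of t n] by (cases "n = 0") auto
  have "l *s (e1 + e2) \<in> A"
  proof (cases "n = 0")
    case True
    then show ?thesis using l0 subalgebra_scale[OF A a(1), of 0] by simp
  next
    case False
    then have "e1 + e2 = (1 / n) *s (t *s a - omult a a)"
      by (simp add: omult_self t_def n_def)
    then show ?thesis using A a(1) by (simp add: subalgebra_scale subalgebra_diff subalgebra_omult)
  qed
  then have "(1 / t) *s (a - l *s (e1 + e2)) \<in> A" (is "?e \<in> A")
    using A a(1) by (blast intro: subalgebra_scale subalgebra_diff)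
  moreover have "otr ?e = 1"
  proof -
    have "l + l = 0" using of_nat_CHAR[where 'a='a] char by (simp flip: mult_2)
    then have "otr (a - l *s (e1 + e2)) = t" by (simp add: otr_def e1_def e2_def t_def)
    then show ?thesis unfolding otr_scale using a(2) by (simp add: t_def)
  qed
  moreover have "onorm ?e = 0"
  proof -
    have "onorm (a - l *s (e1 + e2)) = l * l - t * l + n"
      by (simp add: onorm_def otr_def e1_def e2_def t_def n_def algebra_simps)
    then show ?thesis unfolding onorm_scale using l by simp
  qed
  ultimately show ?thesis by blast
qed

section \<open>Subalgebras containing e1\<close>

lemma omult_e1_left: "omult e1 x = mkoct (oalpha x) (ou x) 0 0"
  and omult_e1_right: "omult x e1 = mkoct (oalpha x) 0 (ov x) 0"
  by (rule oct_eqI; simp add: e1_def)+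

lemma subalgebra_peirce_components:
  assumes B: "is_subalgebra B" "e1 \<in> B" and x: "x \<in> B"
  shows "mkoct 0 (ou x) 0 0 \<in> B" "mkoct 0 0 (ov x) 0 \<in> B" "obeta x *s e2 \<in> B"
proof -
  have "mkoct 0 (ou x) 0 0 = omult e1 x - omult (omult e1 x) e1"
    "mkoct 0 0 (ov x) 0 = omult x e1 - omult e1 (omult x e1)"
    "obeta x *s e2 = x - omult e1 x - omult x e1 + omult (omult e1 x) e1"
    by (rule oct_eqI; simp add: omult_e1_left omult_e1_right e2_def)+
  then show "mkoct 0 (ou x) 0 0 \<in> B" "mkoct 0 0 (ov x) 0 \<in> B" "obeta x *s e2 \<in> B"
    using B x by (simp_all add: subalgebra_add subalgebra_diff subalgebra_omult)
qed

lemma span_pair_lincomb: "a *s p + b *s q \<in> vec.span {p, q}"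
  by (intro vec.span_add vec.span_scale vec.span_base) auto

lemma dim_le_2_if_subset_span_pair: "A \<subseteq> vec.span {p, q} \<Longrightarrow> vec.dim A \<le> 2"
  by (rule order.trans[OF vec.dim_le_card]) (auto simp: card_insert_if)

lemma subalgebra_in_plane_if_u_eq_0:
  fixes B :: "'a::field oct set"
  assumes B: "is_subalgebra B" "e1 \<in> B"
    and beta: "\<forall>x\<in>B. obeta x = 0" and u0: "\<forall>x\<in>B. ou x = 0"
  shows "\<exists>p. B \<subseteq> vec.span {e1, p}"
proof -
  have "cross3f (ov x) (ov y) = 0" if "x \<in> B" "y \<in> B" for x y
  proof -
    have "omult (mkoct 0 0 (ov x) 0) (mkoct 0 0 (ov y) 0) \<in> B"
      using subalgebra_peirce_components[OF B] that B(1) by (simp add: subalgebra_omult)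
    then have "ou (omult (mkoct 0 0 (ov x) 0) (mkoct 0 0 (ov y) 0)) = 0" using u0 by blast
    then show ?thesis by simp
  qed
  then obtain w where "\<forall>a\<in>ov ` B. \<exists>c. a = c *s w"
    using collinear_if_cross3f_eq_0[of "ov ` B"] by blast
  then have w: "\<forall>x\<in>B. \<exists>c. ov x = c *s w" by blast
  have "B \<subseteq> vec.span {e1, mkoct 0 0 w 0}"
  proof
    fix x assume "x \<in> B"
    obtain c where "ov x = c *s w" using w \<open>x \<in> B\<close> by blast
    then have "oalpha x *s e1 + c *s mkoct 0 0 w 0 = x"
      using \<open>x \<in> B\<close> u0 beta by (intro oct_eqI) (simp_all add: e1_def)
    then show "x \<in> vec.span {e1, mkoct 0 0 w 0}"
      using span_pair_lincomb[of "oalpha x" e1 c "mkoct 0 0 w 0"] by simp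
  qed
  then show ?thesis ..
qed

lemma subalgebra_in_plane_if_v_eq_0:
  fixes B :: "'a::field oct set"
  assumes B: "is_subalgebra B" "e1 \<in> B"
    and beta: "\<forall>x\<in>B. obeta x = 0" and v0: "\<forall>x\<in>B. ov x = 0"
  shows "\<exists>p. B \<subseteq> vec.span {e1, p}"
proof -
  have "cross3f (ou x) (ou y) = 0" if "x \<in> B" "y \<in> B" for x y
  proof -
    have "omult (mkoct 0 (ou x) 0 0) (mkoct 0 (ou y) 0 0) \<in> B"
      using subalgebra_peirce_components[OF B] that B(1) by (simp add: subalgebra_omult)
    then have "ov (omult (mkoct 0 (ou x) 0 0) (mkoct 0 (ou y) 0 0)) = 0" using v0 by blast
    then show ?thesis by simp
  qed
  then obtain w where "\<forall>a\<in>ou ` B. \<exists>c. a = c *s w"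
    using collinear_if_cross3f_eq_0[of "ou ` B"] by blast
  then have w: "\<forall>x\<in>B. \<exists>c. ou x = c *s w" by blast
  have "B \<subseteq> vec.span {e1, mkoct 0 w 0 0}"
  proof
    fix x assume "x \<in> B"
    obtain c where "ou x = c *s w" using w \<open>x \<in> B\<close> by blast
    then have "oalpha x *s e1 + c *s mkoct 0 w 0 0 = x"
      using \<open>x \<in> B\<close> v0 beta by (intro oct_eqI) (simp_all add: e1_def)
    then show "x \<in> vec.span {e1, mkoct 0 w 0 0}"
      using span_pair_lincomb[of "oalpha x" e1 c "mkoct 0 w 0 0"] by simp
  qed
  then show ?thesis ..
qed

lemma subalgebra_normal_form_with_e2:
  fixes B :: "'a::field oct set"
  assumes B: "is_subalgebra B" "e1 \<in> B" and e2: "e2 \<in> B" and dim: "3 \<le> vec.dim B"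
  shows "\<exists>g\<in>G2. {e1, e2, uu 1} \<subseteq> g ` B"
proof -
  have "\<exists>x\<in>B. ou x \<noteq> 0 \<or> ov x \<noteq> 0"
  proof (rule ccontr)
    assume none: "\<not> ?thesis"
    have "B \<subseteq> vec.span {e1, e2}"
    proof
      fix x assume "x \<in> B"
      then have "oalpha x *s e1 + obeta x *s e2 = x"
        using none by (intro oct_eqI) (auto simp: e1_def e2_def)
      then show "x \<in> vec.span {e1, e2}"
        using span_pair_lincomb[of "oalpha x" e1 "obeta x" e2] by simp
    qed
    then show False using dim_le_2_if_subset_span_pair[of B] dim by simp
  qed
  then obtain x where x: "x \<in> B" "ou x \<noteq> 0 \<or> ov x \<noteq> 0" by blast
  have "\<exists>h\<in>G2. h ` {e1, e2, uu 1} \<subseteq> B"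
  proof (cases "ou x = 0")
    case False
    then obtain h where h: "h \<in> G2" "h e1 = e1" "h e2 = e2" "h (uu 1) = mkoct 0 (ou x) 0 0"
      using sl3_frame_u by blast
    then show ?thesis
      using B e2 subalgebra_peirce_components(1)[OF B x(1)] by (intro bexI[OF _ h(1)]) auto
  next
    case True
    then have "- ov x \<noteq> 0" using x(2) by simp
    then obtain h where h: "h \<in> G2" "h e1 = e1" "h e2 = e2" "h (uu 1) = mkoct 0 (- ov x) 0 0"
      using sl3_frame_u by blast
    have "(oflip \<circ> h) e1 = e2" "(oflip \<circ> h) e2 = e1" "(oflip \<circ> h) (uu 1) = mkoct 0 0 (ov x) 0"
      using h by (simp_all add: oflip_def e1_def e2_def)
    moreover have "oflip \<circ> h \<in> G2" using G2_comp[OF oflip_G2 h(1)] .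
    ultimately show ?thesis
      using B e2 subalgebra_peirce_components(2)[OF B x(1)] by (intro bexI[of _ "oflip \<circ> h"]) auto
  qed
  then obtain h where "h \<in> G2" "h ` {e1, e2, uu 1} \<subseteq> B" ..
  then show ?thesis using G2_inv G2_subset_inv_image by blast
qed

lemma subalgebra_normal_form_without_e2:
  fixes B :: "'a::field oct set"
  assumes B: "is_subalgebra B" "e1 \<in> B" and e2: "e2 \<notin> B" and dim: "3 \<le> vec.dim B"
  shows "\<exists>g\<in>G2. {e1, uu 1, vv 2} \<subseteq> g ` B"
proof -
  have beta: "\<forall>x\<in>B. obeta x = 0"
  proof
    fix x assume "x \<in> B"
    then have "(1 / obeta x) *s (obeta x *s e2) \<in> B"
      using subalgebra_peirce_components(3)[OF B] subalgebra_scale[OF B(1)] by blast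
    then show "obeta x = 0" using e2 by (cases "obeta x = 0") simp_all
  qed
  have "\<exists>x\<in>B. \<exists>y\<in>B. ou x \<noteq> 0 \<and> ov y \<noteq> 0"
  proof (rule ccontr)
    assume "\<not> ?thesis"
    then obtain p where "B \<subseteq> vec.span {e1, p}"
      using subalgebra_in_plane_if_u_eq_0[OF B beta] subalgebra_in_plane_if_v_eq_0[OF B beta]
      by blast
    then show False using dim_le_2_if_subset_span_pair[of B] dim by simp
  qed
  then obtain x y where x: "x \<in> B" "ou x \<noteq> 0" and y: "y \<in> B" "ov y \<noteq> 0" by blast
  have "omult (mkoct 0 0 (ov y) 0) (mkoct 0 (ou x) 0 0) \<in> B"
    using subalgebra_peirce_components[OF B] x(1) y(1) B(1) by (simp add: subalgebra_omult)
  then have "obeta (omult (mkoct 0 0 (ov y) 0) (mkoct 0 (ou x) 0 0)) = 0" using beta by blast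
  then have "dot3 (ou x) (ov y) = 0" by (simp add: dot3_commute)
  then obtain h where h: "h \<in> G2" "h e1 = e1" "h (uu 1) = mkoct 0 (ou x) 0 0"
    "h (vv 2) = mkoct 0 0 (ov y) 0"
    using sl3_frame x(2) y(2) by blast
  then have "h ` {e1, uu 1, vv 2} \<subseteq> B"
    using B subalgebra_peirce_components[OF B] x(1) y(1) by auto
  then show ?thesis using G2_inv[OF h(1)] G2_subset_inv_image[OF h(1)] by blast
qed

lemma subalgebra_normal_form:
  fixes B :: "'a::field oct set"
  assumes "is_subalgebra B" "e1 \<in> B" "3 \<le> vec.dim B"
  shows "\<exists>g\<in>G2. {e1, e2, uu 1} \<subseteq> g ` B \<or> {e1, uu 1, vv 2} \<subseteq> g ` B"
proof (cases "e2 \<in> B")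
  case True
  then show ?thesis using subalgebra_normal_form_with_e2[OF assms(1,2) _ assms(3)] by blast
next
  case False
  then show ?thesis using subalgebra_normal_form_without_e2[OF assms(1,2) _ assms(3)] by blast
qed

theorem lemma6p11:
  fixes A :: "'a::alg_closed_field oct set"
  assumes "CHAR('a) = 2"
    and "is_subalgebra A"
    and "\<not> A \<subseteq> O0"
    and "vec.dim A \<ge> 3"
  shows "\<exists>g\<in>G2. {e1, e2, uu 1} \<subseteq> g ` A \<or> {e1, uu 1, vv 2} \<subseteq> g ` A"
proof -
  obtain a where "a \<in> A" "otr a \<noteq> 0" using assms(3) by (auto simp: O0_def)
  then obtain e where e: "e \<in> A" "otr e = 1" "onorm e = 0"
    using subalgebra_ex_idempotent[OF assms(1,2)] by blast
  then obtain h where h: "h \<in> G2" "h e1 = e" using G2_e1_to_idempotent by blast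
  let ?B = "inv h ` A"
  have "inv h e = e1" using inv_f_eq[OF bij_is_inj[OF G2_bij[OF h(1)]] h(2)] .
  then have "e1 \<in> ?B" using e(1) by (metis imageI)
  moreover have "is_subalgebra ?B" using G2_image_subalgebra[OF G2_inv[OF h(1)] assms(2)] .
  moreover have "3 \<le> vec.dim ?B" using G2_image_dim[OF G2_inv[OF h(1)]] assms(4) by simp
  ultimately obtain g where "g \<in> G2" "{e1, e2, uu 1} \<subseteq> g ` ?B \<or> {e1, uu 1, vv 2} \<subseteq> g ` ?B"
    using subalgebra_normal_form by blast
  moreover have "g \<circ> inv h \<in> G2" using G2_comp[OF \<open>g \<in> G2\<close> G2_inv[OF h(1)]] .
  ultimately show ?thesis by (intro bexI[of _ "g \<circ> inv h"]) (simp_all add: image_comp)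
qed

end
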